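(* Let $W\in\mathbb{D}_n$ be a Dale matrix with excitatory set $\mathcal{E}$ and inhibitory set $\mathcal{I}$, and let $W'\in\mathbb{D}_{n+1}$ be a Dale matrix with excitatory set $\mathcal{E}$ and inhibitory set $\mathcal{I}\cup\{n+1\}$ such that $W'_{[n]}=W$ (the principal submatrix on $[n]$) and such that for every $i\in\mathcal{E}$: if $W'_{i(n+1)}<0$ then there exists $j\in\mathcal{I}$ with $W_{ij}<0$. Assume both $W$ and $W'$ satisfy the Ground Assumption. Then $\mathcal{C}(W)=\mathcal{C}(W')$.
   Context: Threshold-linear network: $\dot x_i=-x_i+[\sum_j W_{ij}x_j+b_i]_+$ with $[y]_+=\max(0,y)$; a fixed point is $x^*$ with $x^*=[Wx^*+b]_+$. A Dale matrix $W\in\mathbb{D}_n$ is an $n\times n$ real matrix with a partition $[n]=\mathcal{E}\sqcup\mathcal{I}$ such that $W_{ii}=0$, $W_{ji}\ge0$ for all $j$ if $i\in\mathcal{E}$, $W_{ji}\le0$ for all $j$ if $i\in\mathcal{I}$. Ground Assumption: $(I-W)_\sigma$ nonsingular for every nonempty $\sigma$ of indices. Excitatory support: $\mathrm{supp}_+x=\{i\in\mathcal{E}:x_i>0\}$. Combinatorial code: $\mathcal{C}(W)=\{\mathrm{supp}_+x^*: b\in\mathbb{R}^n_{\ge0},\ x^*\in\mathbb{R}^n_{\ge0}\text{ a fixed point of }(W,b)\}$. *)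

theory Defs
  imports "HOL-Analysis.Analysis"
begin

text \<open>Matrices are functions nat => nat => real, indices 0..n-1 stand for [n];
  the new index n+1 of the paper is index n here.  Vectors are nat => real.\<close>

definition dale :: "nat \<Rightarrow> nat set \<Rightarrow> (nat \<Rightarrow> nat \<Rightarrow> real) \<Rightarrow> bool" where
  "dale n E W \<longleftrightarrow> E \<subseteq> {..<n}
     \<and> (\<forall>i<n. W i i = 0)
     \<and> (\<forall>i<n. \<forall>j<n. i \<in> E \<longrightarrow> W j i \<ge> 0)
     \<and> (\<forall>i<n. \<forall>j<n. i \<notin> E \<longrightarrow> W j i \<le> 0)"

definition det_on :: "nat set \<Rightarrow> (nat \<Rightarrow> nat \<Rightarrow> real) \<Rightarrow> real" where
  "det_on s M = (\<Sum>p | p permutes s. of_int (sign p) * (\<Prod>i\<in>s. M i (p i)))"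

definition ground :: "nat \<Rightarrow> (nat \<Rightarrow> nat \<Rightarrow> real) \<Rightarrow> bool" where
  "ground n W \<longleftrightarrow> (\<forall>s. s \<subseteq> {..<n} \<and> s \<noteq> {} \<longrightarrow>
      det_on s (\<lambda>i j. (if i = j then 1 else 0) - W i j) \<noteq> 0)"

definition is_fixed_point :: "nat \<Rightarrow> (nat \<Rightarrow> nat \<Rightarrow> real) \<Rightarrow> (nat \<Rightarrow> real) \<Rightarrow> (nat \<Rightarrow> real) \<Rightarrow> bool" where
  "is_fixed_point n W b x \<longleftrightarrow>
     (\<forall>i<n. x i = max 0 ((\<Sum>j<n. W i j * x j) + b i))"

definition code :: "nat \<Rightarrow> nat set \<Rightarrow> (nat \<Rightarrow> nat \<Rightarrow> real) \<Rightarrow> nat set set" where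
  "code n E W = {{i \<in> E. x i > 0} | x. \<exists>b. (\<forall>i<n. b i \<ge> 0) \<and> (\<forall>i<n. x i \<ge> 0)
                     \<and> is_fixed_point n W b x}"

end

theory Submission
  imports Defs
begin

text \<open>A vector \<open>x \<ge> 0\<close> is a fixed point for some input \<open>b \<ge> 0\<close> exactly when \<open>W x \<le> x\<close>
  (take \<open>b = x - W x\<close>), so the code consists of the excitatory supports of such vectors.
  Adding the inhibitory neuron \<open>n\<close> cannot lose a codeword: give it its rectified drive and
  compensate its inhibition in \<open>b\<close>. Nor can it create one: the inhibition it delivers is
  reproduced by raising all old inhibitory neurons by one common amount \<open>t\<close>. An excitatory
  target of \<open>n\<close> has an inhibitory presynaptic partner, so for large \<open>t\<close> it is inhibited at
  least as much as before; an inhibitory neuron rises by \<open>t\<close>, which exceeds the inhibition it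
  received from \<open>n\<close>. Excitatory activities, hence supports, are unchanged.\<close>

definition admissible :: "nat \<Rightarrow> (nat \<Rightarrow> nat \<Rightarrow> real) \<Rightarrow> (nat \<Rightarrow> real) \<Rightarrow> bool" where
  "admissible n W x \<longleftrightarrow> (\<forall>i<n. 0 \<le> x i \<and> (\<Sum>j<n. W i j * x j) \<le> x i)"

lemma dale_inhibitory_nonpos:
  assumes "dale n E W" "i < n" "j < n" "j \<notin> E"
  shows "W i j \<le> 0"
  using assms by (simp add: dale_def)

lemma dale_inhibitory_sum_neg:
  assumes "dale n E W" "k < n" "j \<in> {..<n} - E" "W k j < 0"
  shows "(\<Sum>l\<in>{..<n} - E. W k l) < 0"
proof -
  have "0 < (\<Sum>l\<in>{..<n} - E. - W k l)"
  proof (rule sum_pos2[of _ j])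
    show "\<And>l. l \<in> {..<n} - E \<Longrightarrow> 0 \<le> - W k l"
      using assms by (simp add: dale_inhibitory_nonpos)
  qed (use assms in auto)
  then show ?thesis by (simp add: sum_negf)
qed

lemma code_eq_admissible_supports:
  "code n E W = {{i \<in> E. 0 < x i} | x. admissible n W x}"
proof -
  have "(\<exists>b. (\<forall>i<n. 0 \<le> b i) \<and> (\<forall>i<n. 0 \<le> x i) \<and> is_fixed_point n W b x)
        \<longleftrightarrow> admissible n W x" for x
  proof
    assume "\<exists>b. (\<forall>i<n. 0 \<le> b i) \<and> (\<forall>i<n. 0 \<le> x i) \<and> is_fixed_point n W b x"
    then obtain b where b: "\<forall>i<n. 0 \<le> b i" and x: "\<forall>i<n. 0 \<le> x i"
      and fp: "\<forall>i<n. x i = max 0 ((\<Sum>j<n. W i j * x j) + b i)"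
      unfolding is_fixed_point_def by blast
    have "(\<Sum>j<n. W i j * x j) \<le> x i" if "i < n" for i
    proof -
      have "(\<Sum>j<n. W i j * x j) \<le> (\<Sum>j<n. W i j * x j) + b i" using b that by simp
      also have "\<dots> \<le> max 0 ((\<Sum>j<n. W i j * x j) + b i)" by simp
      also have "\<dots> = x i" by (rule fp[rule_format, OF that, symmetric])
      finally show ?thesis .
    qed
    with x show "admissible n W x" by (simp add: admissible_def)
  next
    assume adm: "admissible n W x"
    let ?b = "\<lambda>i. x i - (\<Sum>j<n. W i j * x j)"
    have "is_fixed_point n W ?b x"
      using adm by (simp add: is_fixed_point_def admissible_def)
    with adm show "\<exists>b. (\<forall>i<n. 0 \<le> b i) \<and> (\<forall>i<n. 0 \<le> x i) \<and> is_fixed_point n W b x"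
      unfolding admissible_def by (intro exI[of _ ?b]) auto
  qed
  then show ?thesis
    unfolding code_def by blast
qed

lemma admissible_extend:
  assumes adm: "admissible n W x"
    and agree: "\<forall>i<n. \<forall>j<n. W' i j = W i j"
    and inhib: "\<forall>i<n. W' i n \<le> 0"
    and diag: "W' n n = 0"
  defines "v \<equiv> max 0 (\<Sum>j<n. W' n j * x j)"
  shows "admissible (Suc n) W' (x(n := v))"
  unfolding admissible_def
proof (intro allI impI conjI)
  fix i assume i: "i < Suc n"
  have v: "0 \<le> v" by (simp add: v_def)
  have drive: "(\<Sum>j<Suc n. W' i j * (x(n := v)) j) = (\<Sum>j<n. W' i j * x j) + W' i n * v"
    by simp
  show "0 \<le> (x(n := v)) i"
    using adm i v by (auto simp: admissible_def less_Suc_eq)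
  show "(\<Sum>j<Suc n. W' i j * (x(n := v)) j) \<le> (x(n := v)) i"
  proof (cases "i < n")
    case True
    have "W' i n * v \<le> 0" using inhib True v by (simp add: mult_nonpos_nonneg)
    moreover have "(\<Sum>j<n. W' i j * x j) \<le> x i"
      using adm agree True by (simp add: admissible_def)
    ultimately show ?thesis unfolding drive using True by simp
  next
    case False
    with i have "i = n" by simp
    then show ?thesis unfolding drive by (simp add: diag v_def)
  qed
qed

lemma ex_common_bound_scaled:
  fixes A S :: "nat \<Rightarrow> real"
  assumes "\<forall>k<n. 0 \<le> A k \<and> S k \<le> 0"
  obtains t where "0 \<le> t" "\<forall>k<n. A k \<le> t" "\<forall>k<n. S k < 0 \<longrightarrow> A k \<le> t * - S k"
proof
  \<comment> \<open>Each summand bounds both \<open>A k\<close> and \<open>A k / - S k\<close>; the quotient is \<open>0\<close> when \<open>S k = 0\<close>.\<close>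
  define t where "t = (\<Sum>k<n. A k + A k / - S k)"
  have quotient: "0 \<le> A k / - S k" if "k < n" for k
    using assms that by (intro divide_nonneg_nonneg) auto
  have summand: "0 \<le> A k + A k / - S k" if "k < n" for k
    using assms that by (intro add_nonneg_nonneg quotient) auto
  have t_ge: "A k + A k / - S k \<le> t" if "k < n" for k
    unfolding t_def by (rule member_le_sum) (use that summand in auto)
  show "0 \<le> t"
    unfolding t_def by (intro sum_nonneg summand) simp
  show "\<forall>k<n. A k \<le> t"
  proof (intro allI impI)
    fix k assume "k < n"
    then show "A k \<le> t" using t_ge quotient by fastforce
  qed
  show "\<forall>k<n. S k < 0 \<longrightarrow> A k \<le> t * - S k"
  proof (intro allI impI)
    fix k assume k: "k < n" and Sk: "S k < 0"
    have "A k = A k / - S k * - S k" using Sk by simp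
    also have "\<dots> \<le> t * - S k"
      using t_ge[OF k] assms k Sk by (intro mult_right_mono) auto
    finally show "A k \<le> t * - S k" .
  qed
qed

lemma sum_shift_on:
  fixes W :: "nat \<Rightarrow> nat \<Rightarrow> real"
  assumes "I \<subseteq> {..<n}"
  shows "(\<Sum>j<n. W k j * (if j \<in> I then x j + t else x j))
           = (\<Sum>j<n. W k j * x j) + t * (\<Sum>j\<in>I. W k j)"
proof -
  have "(\<Sum>j<n. W k j * (if j \<in> I then x j + t else x j))
          = (\<Sum>j<n. W k j * x j + (if j \<in> I then t * W k j else 0))"
    by (rule sum.cong) (auto simp: algebra_simps)
  also have "\<dots> = (\<Sum>j<n. W k j * x j) + (\<Sum>j\<in>I. t * W k j)"
    using assms by (simp add: sum.distrib sum.inter_restrict[symmetric] Int_absorb1)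
  finally show ?thesis by (simp add: sum_distrib_left)
qed

lemma inhibition_absorbed:
  assumes dale: "dale n E W"
    and w_nonpos: "\<forall>k<n. w k \<le> 0"
    and partner: "\<forall>k\<in>E. w k < 0 \<longrightarrow> (\<exists>j\<in>{..<n} - E. W k j < 0)"
    and u: "0 \<le> u"
    and x: "\<forall>k<n. 0 \<le> x k \<and> (\<Sum>j<n. W k j * x j) + w k * u \<le> x k"
  shows "\<exists>y. admissible n W y \<and> (\<forall>k\<in>E. y k = x k)"
proof -
  define I where "I = {..<n} - E"
  define A where "A k = - w k * u" for k
  define S where "S k = (\<Sum>j\<in>I. W k j)" for k
  have A: "0 \<le> A k" if "k < n" for k
    using w_nonpos that u by (simp add: A_def mult_nonpos_nonneg)
  have S: "S k \<le> 0" if "k < n" for k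
    unfolding S_def I_def
    by (rule sum_nonpos, rule dale_inhibitory_nonpos[OF dale that]) auto
  have S_neg: "S k < 0" if "k \<in> E" "k < n" "w k < 0" for k
    using partner that unfolding S_def I_def by (auto intro: dale_inhibitory_sum_neg[OF dale])
  obtain t where t: "0 \<le> t" and A_le_t: "\<forall>k<n. A k \<le> t"
    and A_le_tS: "\<forall>k<n. S k < 0 \<longrightarrow> A k \<le> t * - S k"
    using ex_common_bound_scaled[of n A S] A S by blast
  define y where "y k = (if k \<in> I then x k + t else x k)" for k
  have "admissible n W y"
    unfolding admissible_def
  proof (intro allI impI conjI)
    fix k assume k: "k < n"
    have drive: "(\<Sum>j<n. W k j * y j) = (\<Sum>j<n. W k j * x j) + t * S k"
      unfolding y_def S_def by (rule sum_shift_on) (simp add: I_def)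
    have old: "(\<Sum>j<n. W k j * x j) \<le> x k + A k" using x k by (auto simp: A_def)
    have tS: "t * S k \<le> 0" using t S[OF k] by (simp add: mult_nonneg_nonpos)
    show "0 \<le> y k" using x k t by (simp add: y_def)
    show "(\<Sum>j<n. W k j * y j) \<le> y k"
    proof (cases "k \<in> E")
      case True
      have "A k \<le> t * - S k"
      proof (cases "w k < 0")
        case True
        then show ?thesis using A_le_tS S_neg \<open>k \<in> E\<close> k by blast
      next
        case False
        then have "w k = 0" using w_nonpos k by (meson not_less order_antisym)
        then show ?thesis using tS by (simp add: A_def)
      qed
      then show ?thesis unfolding drive using True old by (simp add: y_def I_def)
    next
      case False
      have "A k \<le> t" using A_le_t k by blast
      with False show ?thesis unfolding drive using k old tS by (simp add: y_def I_def)
    qed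
  qed
  moreover have "\<forall>k\<in>E. y k = x k" by (simp add: y_def I_def)
  ultimately show ?thesis by blast
qed

lemma code_eq_if_admissible_agree_on:
  assumes "\<And>x. admissible n W x \<Longrightarrow> \<exists>y. admissible m W' y \<and> (\<forall>k\<in>E. y k = x k)"
    and "\<And>y. admissible m W' y \<Longrightarrow> \<exists>x. admissible n W x \<and> (\<forall>k\<in>E. x k = y k)"
  shows "code n E W = code m E W'"
proof -
  have same_support: "{i \<in> E. 0 < x i} = {i \<in> E. 0 < y i}" if "\<forall>k\<in>E. x k = y k"
    for x y :: "nat \<Rightarrow> real"
    using that by auto
  show ?thesis
    unfolding code_eq_admissible_supports
    using assms same_support by (auto 0 3) (metis (no_types, lifting))+
qed

lemma admissible_remove_inhibitory:
  assumes dale: "dale n E W"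
    and agree: "\<forall>i<n. \<forall>j<n. W' i j = W i j"
    and inhib: "\<forall>k<n. W' k n \<le> 0"
    and partner: "\<forall>k\<in>E. W' k n < 0 \<longrightarrow> (\<exists>j\<in>{..<n} - E. W k j < 0)"
    and adm: "admissible (Suc n) W' x"
  shows "\<exists>y. admissible n W y \<and> (\<forall>k\<in>E. y k = x k)"
proof (rule inhibition_absorbed[OF dale inhib partner])
  show "0 \<le> x n" using adm by (simp add: admissible_def)
  show "\<forall>k<n. 0 \<le> x k \<and> (\<Sum>j<n. W k j * x j) + W' k n * x n \<le> x k"
  proof (intro allI impI)
    fix k assume k: "k < n"
    then have "0 \<le> x k \<and> (\<Sum>j<n. W' k j * x j) + W' k n * x n \<le> x k"
      using adm by (simp add: admissible_def)
    moreover have "(\<Sum>j<n. W' k j * x j) = (\<Sum>j<n. W k j * x j)"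
      using agree k by (intro sum.cong) auto
    ultimately show "0 \<le> x k \<and> (\<Sum>j<n. W k j * x j) + W' k n * x n \<le> x k" by simp
  qed
qed

theorem mainTheorem11:
  fixes n :: nat and E :: "nat set" and W W' :: "nat \<Rightarrow> nat \<Rightarrow> real"
  assumes "dale n E W"
    and "dale (Suc n) E W'"
    and "\<forall>i<n. \<forall>j<n. W' i j = W i j"
    and "\<forall>i\<in>E. W' i n < 0 \<longrightarrow> (\<exists>j\<in>{..<n} - E. W i j < 0)"
    and "ground n W"
    and "ground (Suc n) W'"
  shows "code n E W = code (Suc n) E W'"
proof (rule code_eq_if_admissible_agree_on)
  have E: "E \<subseteq> {..<n}" using assms(1) by (simp add: dale_def)
  then have inhib: "\<forall>i<Suc n. W' i n \<le> 0"
    using assms(2) by (auto intro: dale_inhibitory_nonpos)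
  have diag: "W' n n = 0" using assms(2) by (simp add: dale_def)
  fix x
  show "\<exists>y. admissible (Suc n) W' y \<and> (\<forall>k\<in>E. y k = x k)" if "admissible n W x"
    using admissible_extend[OF that assms(3) _ diag] inhib E by fastforce
  show "\<exists>y. admissible n W y \<and> (\<forall>k\<in>E. y k = x k)" if "admissible (Suc n) W' x"
    using admissible_remove_inhibitory[OF assms(1,3) _ assms(4) that] inhib by simp
qed

end
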